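(* Fix $f \in (0,1)$, integers $p, q \ge 2$, and $r_1,\dots,r_{n} \in [0,1)$. Then there is a decomposition of $\mathcal{D}_f^{p,q}$ by at most $n$ hyperplanes (lines in the $(s_1,s_2)$-plane) such that, within each region of the decomposition, each of the functions $(s_1,s_2)\mapsto \pi_{f,s_1,s_2}^{p,q}(r_j)$, $j=1,\dots,n$, is a fixed affine linear function of $(s_1, s_2)$.
   Context: For $f\in(0,1)$, integers $p,q\ge 2$ and $s_1,s_2\in\mathbb{R}$, define for $r\in[0,1)$ $$\pi_{f,s_1,s_2}^{p,q}(r) = \max \Big( \big\{\min\{\phi_i^1(r),\phi_i^2(r)\}:i=1,\dots,p\big\}\cup\big\{ \min\{ \psi_j^1(r),\psi_j^2(r) \}: j=1,\dots,q-1 \big\} \Big),$$ where $\phi_i^1(r) = s_1 r + i \frac{1-fs_1}{p}$, $\phi_i^2(r) = s_2 r + (i-1)\frac{1-fs_2}{p-1}$ for $i=1,\dots,p$, and $\psi_j^1(r) = s_1(r-1) + (j-1) \frac{1+(1-f)s_1}{q-1}$, $\psi_j^2(r) = s_2(r-1) + j \frac{1+(1-f)s_2}{q}$ for $j=1,\dots,q-1$. $\mathcal{D}_f^{p,q}$ is the set of $(s_1,s_2)$ for which this function (extended with period $1$) is a valid cut generating function, namely $\pi(0)=0$, $\pi(f)=1$, $\pi$ subadditive and $1$-periodic; explicitly, $\mathcal{D}_f^{p,q} = I_1\times I_2$ where $I_1=\left[\frac{p+q-1}{(p+q-1)f-p},\frac{1}{f-1}\right]$ if $(p+q-1)f-p<0$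 and $I_1=\left(-\infty,\frac{1}{f-1}\right]$ otherwise, and $I_2=\left[\frac1f,\frac{p+q-1}{q-(p+q-1)(1-f)}\right]$ if $(p+q-1)(1-f)-q<0$ and $I_2=\left[\frac1f,+\infty\right)$ otherwise. *)

theory Defs
  imports "HOL-Analysis.Analysis"
begin

text \<open>The function pi^{p,q}_{f,s1,s2} evaluated at r (formula valid for r in [0,1)).\<close>
definition cgf_pi :: "real \<Rightarrow> nat \<Rightarrow> nat \<Rightarrow> real \<Rightarrow> real \<Rightarrow> real \<Rightarrow> real" where
  "cgf_pi f p q s1 s2 r =
     Max ((\<lambda>i::nat. min (s1 * r + real i * (1 - f * s1) / real p)
                         (s2 * r + (real i - 1) * (1 - f * s2) / (real p - 1))) ` {1..p}
        \<union> (\<lambda>j::nat. min (s1 * (r - 1) + (real j - 1) * (1 + (1 - f) * s1) / (real q - 1))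
                         (s2 * (r - 1) + real j * (1 + (1 - f) * s2) / real q)) ` {1..q-1})"

definition I1 :: "real \<Rightarrow> nat \<Rightarrow> nat \<Rightarrow> real set" where
  "I1 f p q = (if (real p + real q - 1) * f - real p < 0
     then {(real p + real q - 1) / ((real p + real q - 1) * f - real p) .. 1 / (f - 1)}
     else {.. 1 / (f - 1)})"

definition I2 :: "real \<Rightarrow> nat \<Rightarrow> nat \<Rightarrow> real set" where
  "I2 f p q = (if (real p + real q - 1) * (1 - f) - real q < 0
     then {1 / f .. (real p + real q - 1) / (real q - (real p + real q - 1) * (1 - f))}
     else {1 / f ..})"

definition D_dom :: "real \<Rightarrow> nat \<Rightarrow> nat \<Rightarrow> (real \<times> real) set" where
  "D_dom f p q = I1 f p q \<times> I2 f p q"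

definition line_of :: "real \<times> real \<times> real \<Rightarrow> (real \<times> real) set" where
  "line_of l = (case l of (a, b, c) \<Rightarrow> {(x, y). a * x + b * y = c})"

end

theory Submission
  imports Defs
begin

text \<open>For (s1, s2) in the domain, s1 \<le> -1/(1-f) and s2 \<ge> 1/f bound the two slopes of the
tent T x = min (x/f) ((1-x)/(1-f)). Each piece \<phi>^1_i, \<psi>^1_j of \<pi> is the line of slope s1
through a point (a, T a) of the tent, and each piece \<phi>^2_i, \<psi>^2_j the line of slope s2 through
a point (b, T b). Indexed by k = 1, ..., p+q-1, the base points interleave:
0 = b_1 \<le> a_1 \<le> b_2 \<le> a_2 \<le> ... \<le> a_(p+q-1) = 1. A slope-s1 line lies below T to the right
of its base point and above T to the left of it, and the reverse holds for slope-s2 lines.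
Hence \<pi>(r) is the minimum of the k-th pair of lines when b_k \<le> r \<le> a_k, and the maximum of
the k-th s1-line and the (k+1)-st s2-line when a_k \<le> r \<le> b_(k+1). This cell depends on r
alone, so on the domain \<pi>(r) is the minimum or maximum of an affine function of s1 and an
affine function of s2, which is affine on every connected set avoiding the line on which the
two agree.\<close>

definition tent :: "real \<Rightarrow> real \<Rightarrow> real" where
  "tent f x = min (x / f) ((1 - x) / (1 - f))"

lemma tent_left:
  assumes "0 < f" "f < 1" "0 \<le> t" "t \<le> 1"
  shows "tent f (t * f) = t"
proof -
  have "t * f \<le> f" using assms by (simp add: mult_left_le_one_le)
  then have "t \<le> (1 - t * f) / (1 - f)" using assms by (simp add: field_simps)
  then show ?thesis using assms by (simp add: tent_def)
qed

lemma tent_right: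
  assumes "0 < f" "f < 1" "0 \<le> t" "t \<le> 1"
  shows "tent f (1 - t * (1 - f)) = t"
proof -
  have "t * (1 - f) \<le> 1 - f" using assms by (simp add: mult_left_le_one_le)
  then have "t \<le> (1 - t * (1 - f)) / f" using assms by (simp add: field_simps)
  then show ?thesis using assms by (simp add: tent_def)
qed

lemma min_diff_ge: "m \<le> a' - a \<Longrightarrow> m \<le> b' - b \<Longrightarrow> m \<le> min a' b' - min a b"
  for m a a' b b' :: real by (simp add: min_def)

lemma min_diff_le: "a' - a \<le> m \<Longrightarrow> b' - b \<le> m \<Longrightarrow> min a' b' - min a b \<le> m"
  for m a a' b b' :: real by (simp add: min_def)

lemma tent_slope_bounds:
  assumes "0 < f" "f < 1" "x \<le> y"
  shows "- (y - x) / (1 - f) \<le> tent f y - tent f x" "tent f y - tent f x \<le> (y - x) / f"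
proof -
  have ascending: "y / f - x / f = (y - x) / f"
    by (simp add: diff_divide_distrib)
  have descending: "(1 - y) / (1 - f) - (1 - x) / (1 - f) = - (y - x) / (1 - f)"
    by (simp add: diff_divide_distrib)
  have "- (y - x) / (1 - f) \<le> (y - x) / f"
    using assms by (smt (verit) divide_nonneg_pos divide_nonpos_pos)
  then show "- (y - x) / (1 - f) \<le> tent f y - tent f x" "tent f y - tent f x \<le> (y - x) / f"
    unfolding tent_def by (auto intro: min_diff_ge min_diff_le simp: ascending descending)
qed

lemma tent_diff_ge:
  assumes "0 < f" "f < 1" "(1 - f) * s \<le> -1" "x \<le> y"
  shows "s * (y - x) \<le> tent f y - tent f x"
proof -
  have "s * (y - x) * (1 - f) \<le> - (y - x)"
    using mult_right_mono[OF assms(3), of "y - x"] assms(4) by (simp add: algebra_simps)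
  then have "s * (y - x) \<le> - (y - x) / (1 - f)" using assms(2) by (simp add: le_divide_eq)
  also have "\<dots> \<le> tent f y - tent f x" by (rule tent_slope_bounds(1)[OF assms(1,2,4)])
  finally show ?thesis .
qed

lemma tent_diff_le:
  assumes "0 < f" "f < 1" "1 \<le> f * s" "x \<le> y"
  shows "tent f y - tent f x \<le> s * (y - x)"
proof -
  have "y - x \<le> s * (y - x) * f"
    using mult_right_mono[OF assms(3), of "y - x"] assms(4) by (simp add: algebra_simps)
  then have "(y - x) / f \<le> s * (y - x)" using assms(1) by (simp add: divide_le_eq)
  with tent_slope_bounds(2)[OF assms(1,2,4)] show ?thesis by linarith
qed

definition line_through :: "(real \<Rightarrow> real) \<Rightarrow> real \<Rightarrow> real \<Rightarrow> real \<Rightarrow> real" where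
  "line_through T a s r = T a + s * (r - a)"

lemma line_through_at_base [simp]: "line_through T r s r = T r"
  by (simp add: line_through_def)

lemma line_through_mono_base:
  assumes "\<And>x y. x \<le> y \<Longrightarrow> s * (y - x) \<le> T y - T x" "a \<le> b"
  shows "line_through T a s r \<le> line_through T b s r"
  using assms(1)[OF assms(2)] by (simp add: line_through_def algebra_simps)

lemma line_through_antimono_base:
  assumes "\<And>x y. x \<le> y \<Longrightarrow> T y - T x \<le> s * (y - x)" "a \<le> b"
  shows "line_through T b s r \<le> line_through T a s r"
  using assms(1)[OF assms(2)] by (simp add: line_through_def algebra_simps)

locale interleaved =
  fixes a b :: "nat \<Rightarrow> real" and N :: nat
  assumes b_le_a: "\<And>k. 1 \<le> k \<Longrightarrow> k \<le> N \<Longrightarrow> b k \<le> a k"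
    and a_le_b_Suc: "\<And>k. 1 \<le> k \<Longrightarrow> k < N \<Longrightarrow> a k \<le> b (Suc k)"
begin

lemma a_le_b:
  assumes "1 \<le> i" "i < j" "j \<le> N"
  shows "a i \<le> b j"
proof -
  from assms(2) have "Suc i \<le> j" by simp
  then show ?thesis using assms(3)
  proof (induction j rule: dec_induct)
    case base
    then show ?case using assms(1) by (intro a_le_b_Suc) auto
  next
    case (step j)
    then have "a i \<le> b j" by simp
    also have "b j \<le> a j" using step assms(1) by (intro b_le_a) auto
    also have "a j \<le> b (Suc j)" using step assms(1) by (intro a_le_b_Suc) auto
    finally show ?case .
  qed
qed

lemma a_mono:
  assumes "1 \<le> i" "i \<le> j" "j \<le> N"
  shows "a i \<le> a j"
proof (cases "i = j")
  case False
  then have "a i \<le> b j" using assms by (intro a_le_b) auto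
  also have "b j \<le> a j" using assms by (intro b_le_a) auto
  finally show ?thesis .
qed simp

lemma b_mono:
  assumes "1 \<le> i" "i \<le> j" "j \<le> N"
  shows "b i \<le> b j"
proof (cases "i = j")
  case False
  have "b i \<le> a i" using assms by (intro b_le_a) auto
  also have "a i \<le> b j" using assms False by (intro a_le_b) auto
  finally show ?thesis .
qed simp

lemma cell_cases:
  assumes "b 1 \<le> r" "r \<le> a N" "1 \<le> N"
  obtains k where "1 \<le> k" "k \<le> N" "b k \<le> r" "r \<le> a k"
    | k where "1 \<le> k" "k < N" "a k \<le> r" "r \<le> b (Suc k)"
proof -
  define K where "K = {k \<in> {1..N}. b k \<le> r}"
  define k where "k = Max K"
  have "finite K" "1 \<in> K" using assms by (auto simp: K_def)
  then have "k \<in> K" and maximal: "\<And>i. i \<in> K \<Longrightarrow> i \<le> k"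
    unfolding k_def using Max_in by auto
  then have k: "1 \<le> k" "k \<le> N" "b k \<le> r" by (auto simp: K_def)
  show thesis
  proof (cases "r \<le> a k")
    case True
    then show thesis using k that(1) by auto
  next
    case False
    then have "k < N" using k assms(2) by (cases "k = N") auto
    moreover have "r \<le> b (Suc k)" using maximal[of "Suc k"] \<open>k < N\<close> by (fastforce simp: K_def)
    ultimately show thesis using k False that(2) by auto
  qed
qed

context
  fixes T :: "real \<Rightarrow> real" and s1 s2 r :: real
  assumes steep_descent: "\<And>x y. x \<le> y \<Longrightarrow> s1 * (y - x) \<le> T y - T x"
    and steep_ascent: "\<And>x y. x \<le> y \<Longrightarrow> T y - T x \<le> s2 * (y - x)"
begin

lemma descent_line_mono: "x \<le> y \<Longrightarrow> line_through T x s1 r \<le> line_through T y s1 r"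
  by (rule line_through_mono_base[OF steep_descent])

lemma ascent_line_antimono: "x \<le> y \<Longrightarrow> line_through T y s2 r \<le> line_through T x s2 r"
  by (rule line_through_antimono_base[OF steep_ascent])

lemma Max_min_lines_in_cell:
  assumes "1 \<le> k" "k \<le> N" "b k \<le> r" "r \<le> a k"
  shows "Max ((\<lambda>i. min (line_through T (a i) s1 r) (line_through T (b i) s2 r)) ` {1..N})
       = min (line_through T (a k) s1 r) (line_through T (b k) s2 r)"
proof (rule Max_eqI)
  have "T r \<le> line_through T (a k) s1 r"
    using descent_line_mono[OF assms(4)] by simp
  moreover have "T r \<le> line_through T (b k) s2 r"
    using ascent_line_antimono[OF assms(3)] by simp
  ultimately have above: "T r \<le> min (line_through T (a k) s1 r) (line_through T (b k) s2 r)"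
    by simp
  fix y assume "y \<in> (\<lambda>i. min (line_through T (a i) s1 r) (line_through T (b i) s2 r)) ` {1..N}"
  then obtain i where i: "1 \<le> i" "i \<le> N" and y: "y = min (line_through T (a i) s1 r) (line_through T (b i) s2 r)"
    by auto
  consider "i < k" | "i = k" | "k < i" by linarith
  then show "y \<le> min (line_through T (a k) s1 r) (line_through T (b k) s2 r)"
  proof cases
    case 1
    then have "a i \<le> r" using a_le_b[of i k] i assms by simp
    then have "line_through T (a i) s1 r \<le> T r"
      using descent_line_mono by fastforce
    then show ?thesis using y above by linarith
  next
    case 3
    then have "r \<le> b i" using a_le_b[of k i] i assms by simp
    then have "line_through T (b i) s2 r \<le> T r"
      using ascent_line_antimono by fastforce
    then show ?thesis using y above by linarith
  qed (use y in simp)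
qed (use assms in auto)

lemma Max_min_lines_between_cells:
  assumes "1 \<le> k" "k < N" "a k \<le> r" "r \<le> b (Suc k)"
  shows "Max ((\<lambda>i. min (line_through T (a i) s1 r) (line_through T (b i) s2 r)) ` {1..N})
       = max (line_through T (a k) s1 r) (line_through T (b (Suc k)) s2 r)"
proof (rule Max_eqI)
  have "b k \<le> r" using b_le_a[of k] assms by simp
  then have "line_through T (a k) s1 r \<le> line_through T (b k) s2 r"
    using descent_line_mono[OF assms(3)] ascent_line_antimono[of "b k" r] by simp
  then have at_k: "min (line_through T (a k) s1 r) (line_through T (b k) s2 r) = line_through T (a k) s1 r"
    by simp
  have "r \<le> a (Suc k)" using b_le_a[of "Suc k"] assms by simp
  then have "line_through T (b (Suc k)) s2 r \<le> line_through T (a (Suc k)) s1 r"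
    using descent_line_mono[of r "a (Suc k)"] ascent_line_antimono[OF assms(4)] by simp
  then have at_Suc_k: "min (line_through T (a (Suc k)) s1 r) (line_through T (b (Suc k)) s2 r)
      = line_through T (b (Suc k)) s2 r"
    by simp
  show "max (line_through T (a k) s1 r) (line_through T (b (Suc k)) s2 r)
      \<in> (\<lambda>i. min (line_through T (a i) s1 r) (line_through T (b i) s2 r)) ` {1..N}"
    using assms at_k at_Suc_k
    by (cases "line_through T (a k) s1 r \<le> line_through T (b (Suc k)) s2 r")
       (auto simp: max_def image_iff intro: bexI[of _ k] bexI[of _ "Suc k"])
  fix y assume "y \<in> (\<lambda>i. min (line_through T (a i) s1 r) (line_through T (b i) s2 r)) ` {1..N}"
  then obtain i where i: "1 \<le> i" "i \<le> N" and y: "y = min (line_through T (a i) s1 r) (line_through T (b i) s2 r)"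
    by auto
  show "y \<le> max (line_through T (a k) s1 r) (line_through T (b (Suc k)) s2 r)"
  proof (cases "i \<le> k")
    case True
    then have "line_through T (a i) s1 r \<le> line_through T (a k) s1 r"
      using a_mono[of i k] i assms by (intro descent_line_mono) auto
    then show ?thesis using y by linarith
  next
    case False
    then have "line_through T (b i) s2 r \<le> line_through T (b (Suc k)) s2 r"
      using b_mono[of "Suc k" i] i assms by (intro ascent_line_antimono) auto
    then show ?thesis using y by linarith
  qed
qed simp

end

end

text \<open>The slope-s1 piece of index k (that is, \<phi>^1_k for k \<le> p and \<psi>^1_(p+q-k) for k > p) is the
line through the tent at node1 f p q k; likewise the slope-s2 pieces \<phi>^2_k and \<psi>^2_(p+q-k) pass
through the tent at node2 f p q k.\<close>

definition node1 :: "real \<Rightarrow> nat \<Rightarrow> nat \<Rightarrow> nat \<Rightarrow> real" where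
  "node1 f p q k = (if k \<le> p then real k / real p * f
     else 1 - (real p + real q - real k - 1) / (real q - 1) * (1 - f))"

definition node2 :: "real \<Rightarrow> nat \<Rightarrow> nat \<Rightarrow> nat \<Rightarrow> real" where
  "node2 f p q k = (if k \<le> p then (real k - 1) / (real p - 1) * f
     else 1 - (real p + real q - real k) / real q * (1 - f))"

lemma pred_ratio_le_ratio: "1 < n \<Longrightarrow> m \<le> n \<Longrightarrow> (m - 1) / (n - 1) \<le> m / n" for m n :: real
  by (simp add: divide_simps) (simp add: algebra_simps)

lemma ratio_le_ratio_pred: "0 \<le> m \<Longrightarrow> 1 < n \<Longrightarrow> m / n \<le> m / (n - 1)" for m n :: real
  by (simp add: divide_left_mono)

lemma interleaved_nodes:
  assumes "0 < f" "f < 1" "2 \<le> p" "2 \<le> q"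
  shows "interleaved (node1 f p q) (node2 f p q) (p + q - 1)"
proof
  fix k assume k: "1 \<le> k" "k \<le> p + q - 1"
  show "node2 f p q k \<le> node1 f p q k"
  proof (cases "k \<le> p")
    case True
    then have "(real k - 1) / (real p - 1) \<le> real k / real p"
      using assms by (intro pred_ratio_le_ratio) auto
    then have "(real k - 1) / (real p - 1) * f \<le> real k / real p * f"
      using assms by (intro mult_right_mono) auto
    then show ?thesis using True by (simp add: node1_def node2_def)
  next
    case False
    then have "(real p + real q - real k - 1) / (real q - 1) \<le> (real p + real q - real k) / real q"
      using assms k pred_ratio_le_ratio[of "real q" "real p + real q - real k"] by auto
    then have "(real p + real q - real k - 1) / (real q - 1) * (1 - f)
        \<le> (real p + real q - real k) / real q * (1 - f)"
      using assms by (intro mult_right_mono) auto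
    then show ?thesis using False by (simp add: node1_def node2_def)
  qed
next
  fix k assume k: "1 \<le> k" "k < p + q - 1"
  consider "Suc k \<le> p" | "k = p" | "p < k" by linarith
  then show "node1 f p q k \<le> node2 f p q (Suc k)"
  proof cases
    case 1
    then have "real k / real p \<le> real k / (real p - 1)"
      using assms by (intro ratio_le_ratio_pred) auto
    then have "real k / real p * f \<le> real k / (real p - 1) * f"
      using assms by (intro mult_right_mono) auto
    then show ?thesis using 1 by (simp add: node1_def node2_def)
  next
    case 2
    then show ?thesis using assms by (simp add: node1_def node2_def field_simps)
  next
    case 3
    then have "(real p + real q - real k - 1) / real q \<le> (real p + real q - real k - 1) / (real q - 1)"
      using assms k by (intro ratio_le_ratio_pred) auto
    then have "(real p + real q - real k - 1) / real q * (1 - f)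
        \<le> (real p + real q - real k - 1) / (real q - 1) * (1 - f)"
      using assms by (intro mult_right_mono) auto
    then show ?thesis using 3 by (simp add: node1_def node2_def algebra_simps)
  qed
qed

lemma node2_first: "2 \<le> p \<Longrightarrow> node2 f p q 1 = 0"
  by (simp add: node2_def)

lemma node1_last: "2 \<le> q \<Longrightarrow> node1 f p q (p + q - 1) = 1"
  by (simp add: node1_def)

lemma line_through_tent_left:
  assumes "0 < f" "f < 1" "0 \<le> t" "t \<le> 1"
  shows "line_through (tent f) (t * f) s r = s * r + t * (1 - f * s)"
proof -
  have "line_through (tent f) (t * f) s r = t + s * (r - t * f)"
    unfolding line_through_def tent_left[OF assms] ..
  then show ?thesis by (simp add: algebra_simps)
qed

lemma line_through_tent_right:
  assumes "0 < f" "f < 1" "0 \<le> t" "t \<le> 1"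
  shows "line_through (tent f) (1 - t * (1 - f)) s r = s * (r - 1) + t * (1 + (1 - f) * s)"
proof -
  have "line_through (tent f) (1 - t * (1 - f)) s r = t + s * (r - (1 - t * (1 - f)))"
    unfolding line_through_def tent_right[OF assms] ..
  then show ?thesis by (simp add: algebra_simps)
qed

lemma cgf_pi_eq_Max_lines:
  assumes "0 < f" "f < 1" "2 \<le> p" "2 \<le> q"
  shows "cgf_pi f p q s1 s2 r = Max ((\<lambda>k. min (line_through (tent f) (node1 f p q k) s1 r)
                                             (line_through (tent f) (node2 f p q k) s2 r)) ` {1..p+q-1})"
proof -
  let ?piece = "\<lambda>k. min (line_through (tent f) (node1 f p q k) s1 r) (line_through (tent f) (node2 f p q k) s2 r)"
  have index_split: "{1..p+q-1} = {1..p} \<union> (\<lambda>j. p + q - j) ` {1..q-1}"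
  proof (rule set_eqI, rule iffI)
    fix k assume k: "k \<in> {1..p+q-1}"
    show "k \<in> {1..p} \<union> (\<lambda>j. p + q - j) ` {1..q-1}"
    proof (cases "k \<le> p")
      case False
      then have "k = p + q - (p + q - k)" "p + q - k \<in> {1..q-1}" using k by auto
      then show ?thesis by blast
    qed (use k in auto)
  qed (use assms in auto)
  have low: "?piece ` {1..p} = (\<lambda>i. min (s1 * r + real i * (1 - f * s1) / real p)
      (s2 * r + (real i - 1) * (1 - f * s2) / (real p - 1))) ` {1..p}"
  proof (rule image_cong)
    fix i assume i: "i \<in> {1..p}"
    have nodes: "node1 f p q i = real i / real p * f" "node2 f p q i = (real i - 1) / (real p - 1) * f"
      using i by (simp_all add: node1_def node2_def)
    have "0 \<le> real i / real p" "real i / real p \<le> 1"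
      "0 \<le> (real i - 1) / (real p - 1)" "(real i - 1) / (real p - 1) \<le> 1"
      using i assms by auto
    note lines = line_through_tent_left[OF assms(1,2) this(1,2)] line_through_tent_left[OF assms(1,2) this(3,4)]
    show "?piece i = min (s1 * r + real i * (1 - f * s1) / real p)
      (s2 * r + (real i - 1) * (1 - f * s2) / (real p - 1))"
      unfolding nodes lines by simp
  qed simp
  have high: "?piece ` (\<lambda>j. p + q - j) ` {1..q-1}
      = (\<lambda>j. min (s1 * (r - 1) + (real j - 1) * (1 + (1 - f) * s1) / (real q - 1))
                 (s2 * (r - 1) + real j * (1 + (1 - f) * s2) / real q)) ` {1..q-1}"
    unfolding image_image
  proof (rule image_cong)
    fix j assume j: "j \<in> {1..q-1}"
    then have nodes: "node1 f p q (p + q - j) = 1 - (real j - 1) / (real q - 1) * (1 - f)"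
      "node2 f p q (p + q - j) = 1 - real j / real q * (1 - f)"
      by (auto simp: node1_def node2_def of_nat_diff)
    have "0 \<le> (real j - 1) / (real q - 1)" "(real j - 1) / (real q - 1) \<le> 1"
      "0 \<le> real j / real q" "real j / real q \<le> 1"
      using j assms by auto
    note lines = line_through_tent_right[OF assms(1,2) this(1,2)] line_through_tent_right[OF assms(1,2) this(3,4)]
    show "?piece (p + q - j) = min (s1 * (r - 1) + (real j - 1) * (1 + (1 - f) * s1) / (real q - 1))
      (s2 * (r - 1) + real j * (1 + (1 - f) * s2) / real q)"
      unfolding nodes lines by simp
  qed simp
  show ?thesis unfolding index_split image_Un low high cgf_pi_def ..
qed

lemma connected_on_one_side_of_line:
  assumes "connected C" "C \<inter> line_of (a, b, c) = {}"
  shows "(\<forall>(x, y)\<in>C. a * x + b * y < c) \<or> (\<forall>(x, y)\<in>C. c < a * x + b * y)"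
proof (rule ccontr)
  assume "\<not> ?thesis"
  then obtain u v where uv: "u \<in> C" "v \<in> C" "inner (a, b) u \<le> c" "c \<le> inner (a, b) v"
    by (auto simp: inner_Pair not_less)
  obtain z where "z \<in> C" "inner (a, b) z = c"
    using connected_ivt_hyperplane[OF assms(1) uv] by blast
  then show False using assms(2) by (cases z) (auto simp: line_of_def inner_Pair)
qed

lemma min_max_affine_off_line:
  fixes H :: "real \<Rightarrow> real \<Rightarrow> real"
  assumes "H = min \<or> H = max"
  obtains u v w where "(u, v) \<noteq> (0, 0)"
    and "\<And>C. connected C \<Longrightarrow> C \<inter> line_of (u, v, w) = {} \<Longrightarrow>
           \<exists>\<alpha> \<beta> \<gamma>. \<forall>(x, y)\<in>C.
             H (a * x + b * y + c) (a' * x + b' * y + c') = \<alpha> * x + \<beta> * y + \<gamma>"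
proof -
  have affine_if_ordered: "\<exists>\<alpha> \<beta> \<gamma>. \<forall>(x, y)\<in>C.
      H (a * x + b * y + c) (a' * x + b' * y + c') = \<alpha> * x + \<beta> * y + \<gamma>"
    if "(\<forall>(x, y)\<in>C. a * x + b * y + c \<le> a' * x + b' * y + c')
      \<or> (\<forall>(x, y)\<in>C. a' * x + b' * y + c' \<le> a * x + b * y + c)" for C
  proof (cases "H = min")
    case True
    from that show ?thesis
    proof
      assume "\<forall>(x, y)\<in>C. a * x + b * y + c \<le> a' * x + b' * y + c'"
      then show ?thesis using True by (intro exI[of _ a] exI[of _ b] exI[of _ c]) auto
    next
      assume "\<forall>(x, y)\<in>C. a' * x + b' * y + c' \<le> a * x + b * y + c"
      then show ?thesis using True by (intro exI[of _ a'] exI[of _ b'] exI[of _ c']) auto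
    qed
  next
    case False
    then have "H = max" using assms by simp
    from that show ?thesis
    proof
      assume "\<forall>(x, y)\<in>C. a * x + b * y + c \<le> a' * x + b' * y + c'"
      then show ?thesis using \<open>H = max\<close> by (intro exI[of _ a'] exI[of _ b'] exI[of _ c']) auto
    next
      assume "\<forall>(x, y)\<in>C. a' * x + b' * y + c' \<le> a * x + b * y + c"
      then show ?thesis using \<open>H = max\<close> by (intro exI[of _ a] exI[of _ b] exI[of _ c]) auto
    qed
  qed

  show thesis
  proof (cases "(a - a', b - b') = (0, 0)")
    case True
    \<comment> \<open>the two functions differ by a constant, so any line will do\<close>
    then have "(\<forall>(x, y)\<in>C. a * x + b * y + c \<le> a' * x + b' * y + c')
      \<or> (\<forall>(x, y)\<in>C. a' * x + b' * y + c' \<le> a * x + b * y + c)" for C :: "(real \<times> real) set"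
      by (cases "c \<le> c'") auto
    then show thesis using affine_if_ordered by (intro that[of 1 0 0]) auto
  next
    case False
    show thesis
    proof (rule that[OF False])
      fix C assume "connected C" "C \<inter> line_of (a - a', b - b', c' - c) = {}"
      from connected_on_one_side_of_line[OF this]
      have "(\<forall>(x, y)\<in>C. a * x + b * y + c \<le> a' * x + b' * y + c')
          \<or> (\<forall>(x, y)\<in>C. a' * x + b' * y + c' \<le> a * x + b * y + c)"
        by (elim disjE) (auto simp: left_diff_distrib)
      then show "\<exists>\<alpha> \<beta> \<gamma>. \<forall>(x, y)\<in>C.
          H (a * x + b * y + c) (a' * x + b' * y + c') = \<alpha> * x + \<beta> * y + \<gamma>"
        by (rule affine_if_ordered)
    qed
  qed
qed

lemma D_dom_slope_bounds:
  assumes "(s1, s2) \<in> D_dom f p q" "0 < f" "f < 1"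
  shows "(1 - f) * s1 \<le> -1" "1 \<le> f * s2"
proof -
  have "s1 \<le> 1 / (f - 1)" "1 / f \<le> s2"
    using assms(1) by (auto simp: D_dom_def I1_def I2_def split: if_splits)
  then show "(1 - f) * s1 \<le> -1" "1 \<le> f * s2"
    using assms(2,3) by (simp_all add: divide_le_eq le_divide_eq algebra_simps)
qed

lemma cgf_pi_min_or_max_of_lines:
  assumes "0 < f" "f < 1" "2 \<le> p" "2 \<le> q" "0 \<le> r" "r < 1"
  obtains H :: "real \<Rightarrow> real \<Rightarrow> real" and x y where "H = min \<or> H = max"
    and "\<And>s1 s2. (s1, s2) \<in> D_dom f p q \<Longrightarrow>
           cgf_pi f p q s1 s2 r = H (line_through (tent f) x s1 r) (line_through (tent f) y s2 r)"
proof -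
  interpret interleaved "node1 f p q" "node2 f p q" "p + q - 1"
    using assms by (intro interleaved_nodes)
  note Max_eq = cgf_pi_eq_Max_lines[OF assms(1-4)]
  have steep: "\<And>x y. x \<le> y \<Longrightarrow> s1 * (y - x) \<le> tent f y - tent f x"
    "\<And>x y. x \<le> y \<Longrightarrow> tent f y - tent f x \<le> s2 * (y - x)" if "(s1, s2) \<in> D_dom f p q" for s1 s2
    using D_dom_slope_bounds[OF that assms(1,2)] assms(1,2) by (simp_all add: tent_diff_ge tent_diff_le)
  have "node2 f p q 1 \<le> r" "r \<le> node1 f p q (p + q - 1)" "1 \<le> p + q - 1"
    using assms node2_first[of p f q] node1_last[of q f p] by simp_all
  then show thesis
  proof (cases rule: cell_cases)
    case (1 k)
    show thesis using Max_min_lines_in_cell[OF steep 1] Max_eq by (intro that[of min]) auto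
  next
    case (2 k)
    show thesis using Max_min_lines_between_cells[OF steep 2] Max_eq by (intro that[of max]) auto
  qed
qed

lemma cgf_pi_affine_off_line:
  assumes "0 < f" "f < 1" "2 \<le> p" "2 \<le> q" "0 \<le> r" "r < 1"
  shows "\<exists>l. (case l of (a, b, c) \<Rightarrow> (a, b) \<noteq> (0, 0)) \<and>
           (\<forall>C. connected C \<longrightarrow> C \<subseteq> D_dom f p q \<longrightarrow> C \<inter> line_of l = {} \<longrightarrow>
              (\<exists>\<alpha> \<beta> \<gamma>. \<forall>(s1, s2)\<in>C. cgf_pi f p q s1 s2 r = \<alpha> * s1 + \<beta> * s2 + \<gamma>))"
proof -
  obtain H :: "real \<Rightarrow> real \<Rightarrow> real" and x y where H: "H = min \<or> H = max"
    and pi_eq: "\<And>s1 s2. (s1, s2) \<in> D_dom f p q \<Longrightarrow>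
           cgf_pi f p q s1 s2 r = H (line_through (tent f) x s1 r) (line_through (tent f) y s2 r)"
    by (rule cgf_pi_min_or_max_of_lines[OF assms]) (rule that)
  obtain a b c where "(a, b) \<noteq> (0, 0)"
    and affine: "\<And>C. connected C \<Longrightarrow> C \<inter> line_of (a, b, c) = {} \<Longrightarrow>
           \<exists>\<alpha> \<beta> \<gamma>. \<forall>(s1, s2)\<in>C. H ((r - x) * s1 + 0 * s2 + tent f x) (0 * s1 + (r - y) * s2 + tent f y)
             = \<alpha> * s1 + \<beta> * s2 + \<gamma>"
    by (rule min_max_affine_off_line[OF H, where a = "r - x" and b = 0 and c = "tent f x"
          and a' = 0 and b' = "r - y" and c' = "tent f y"]) (rule that)
  show ?thesis
  proof (intro exI[of _ "(a, b, c)"] conjI allI impI)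
    fix C assume C: "connected C" "C \<subseteq> D_dom f p q" "C \<inter> line_of (a, b, c) = {}"
    from affine[OF C(1,3)] obtain \<alpha> \<beta> \<gamma> where on_C: "\<forall>(s1, s2)\<in>C.
        H ((r - x) * s1 + 0 * s2 + tent f x) (0 * s1 + (r - y) * s2 + tent f y) = \<alpha> * s1 + \<beta> * s2 + \<gamma>"
      by blast
    have "cgf_pi f p q s1 s2 r = \<alpha> * s1 + \<beta> * s2 + \<gamma>" if "(s1, s2) \<in> C" for s1 s2
    proof -
      have "cgf_pi f p q s1 s2 r = H (line_through (tent f) x s1 r) (line_through (tent f) y s2 r)"
        using pi_eq that C(2) by blast
      also have "\<dots> = H ((r - x) * s1 + 0 * s2 + tent f x) (0 * s1 + (r - y) * s2 + tent f y)"
        by (simp add: line_through_def algebra_simps)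
      also have "\<dots> = \<alpha> * s1 + \<beta> * s2 + \<gamma>"
        using on_C that by blast
      finally show ?thesis .
    qed
    then show "\<exists>\<alpha> \<beta> \<gamma>. \<forall>(s1, s2)\<in>C. cgf_pi f p q s1 s2 r = \<alpha> * s1 + \<beta> * s2 + \<gamma>"
      by blast
  qed (use \<open>(a, b) \<noteq> (0, 0)\<close> in simp)
qed

theorem proposition1:
  fixes f :: real and p q :: nat and rs :: "real list"
  assumes "0 < f" "f < 1" "p \<ge> 2" "q \<ge> 2"
    and "\<forall>r\<in>set rs. 0 \<le> r \<and> r < 1"
  shows "\<exists>L :: (real \<times> real \<times> real) list.
           length L \<le> length rs
         \<and> (\<forall>(a, b, c)\<in>set L. (a, b) \<noteq> (0, 0))
         \<and> (\<forall>C\<in>components (D_dom f p q - (\<Union>l\<in>set L. line_of l)).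
              \<forall>r\<in>set rs. \<exists>\<alpha> \<beta> \<gamma>. \<forall>(s1, s2)\<in>C.
                 cgf_pi f p q s1 s2 r = \<alpha> * s1 + \<beta> * s2 + \<gamma>)"
proof -
  let ?good = "\<lambda>r l. (case l of (a, b, c) \<Rightarrow> (a, b) \<noteq> (0, 0)) \<and>
      (\<forall>C. connected C \<longrightarrow> C \<subseteq> D_dom f p q \<longrightarrow> C \<inter> line_of l = {} \<longrightarrow>
         (\<exists>\<alpha> \<beta> \<gamma>. \<forall>(s1, s2)\<in>C. cgf_pi f p q s1 s2 r = \<alpha> * s1 + \<beta> * s2 + \<gamma>))"
  have "\<forall>r\<in>set rs. \<exists>l. ?good r l"
    using cgf_pi_affine_off_line[OF assms(1-4)] assms(5) by blast
  from bchoice[OF this] obtain line where line: "\<forall>r\<in>set rs. ?good r (line r)" ..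
  show ?thesis
  proof (intro exI[of _ "map line rs"] conjI ballI)
    fix C r assume C: "C \<in> components (D_dom f p q - (\<Union>l\<in>set (map line rs). line_of l))" and "r \<in> set rs"
    moreover have "connected C" "C \<subseteq> D_dom f p q" "C \<inter> line_of (line r) = {}"
      using in_components_connected[OF C] in_components_subset[OF C] \<open>r \<in> set rs\<close> by auto
    ultimately show "\<exists>\<alpha> \<beta> \<gamma>. \<forall>(s1, s2)\<in>C. cgf_pi f p q s1 s2 r = \<alpha> * s1 + \<beta> * s2 + \<gamma>"
      using line by blast
  qed (use line in auto)
qed

end
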